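(* Let $(H,G,\alpha,f)$ be a normalized crossed system and let $H\times G$ denote the direct product of groups. There is a bijection between the set of group homomorphisms $\psi:H\#_\alpha^f G\to H\times G$ and the set of quadruples $(s,u,r,v)$, where $s:H\to G$ and $u:H\to H$ are group homomorphisms and $r:G\to H$, $v:G\to G$ are maps, satisfying for all $g,g_1,g_2\in G$, $h\in H$: $$v(g_1)v(g_2)=s(f(g_1,g_2))v(g_1g_2),\quad r(g)u(h)=u(g\triangleright h)r(g),$$ $$r(g_1)r(g_2)=u(f(g_1,g_2))r(g_1g_2),\quad v(g)s(h)=s(g\triangleright h)v(g).$$ Under this bijection $\psi(h,g)=\big(u(h)r(g),\ s(h)v(g)\big)$.
   Context: For groups $H,G$ and a map $\alpha:G\to\mathrm{Aut}(H)$ write $g\triangleright h:=\alpha(g)(h)$. A normalized crossed system is a quadruple $(H,G,\alpha,f)$ with maps $\alpha:G\to\mathrm{Aut}(H)$, $f:G\times G\to H$, $f(1,1)=1$, such that for all $g_1,g_2,g_3\in G$, $h\in H$: (WA) $g_1\triangleright(g_2\triangleright h)=f(g_1,g_2)\big((g_1g_2)\triangleright h\big)f(g_1,g_2)^{-1}$ and (CC) $f(g_1,g_2)f(g_1g_2,g_3)=\big(g_1\triangleright f(g_2,g_3)\big)f(g_1,g_2g_3)$. The crossed product $H\#_\alpha^f G$ is the group on the set $H\times G$ with multiplication $(h_1,g_1)\cdot(h_2,g_2)=\big(h_1(g_1\triangleright h_2)f(g_1,g_2),g_1g_2\big)$ and unit $(1,1)$. *)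

theory Defs
  imports "HOL-Algebra.Group" "HOL-Library.FuncSet"
begin

text \<open>Normalized crossed system (H, G, alpha, f); alpha g acts as an automorphism of H,
  written alpha g h for g acting on h.\<close>
definition normalized_crossed_system ::
  "'h monoid \<Rightarrow> 'g monoid \<Rightarrow> ('g \<Rightarrow> 'h \<Rightarrow> 'h) \<Rightarrow> ('g \<Rightarrow> 'g \<Rightarrow> 'h) \<Rightarrow> bool" where
  "normalized_crossed_system H G \<alpha> f \<longleftrightarrow>
     group H \<and> group G \<and>
     (\<forall>g\<in>carrier G. \<alpha> g \<in> iso H H) \<and>
     (\<forall>g1\<in>carrier G. \<forall>g2\<in>carrier G. f g1 g2 \<in> carrier H) \<and>
     f \<one>\<^bsub>G\<^esub> \<one>\<^bsub>G\<^esub> = \<one>\<^bsub>H\<^esub> \<and>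
     (\<forall>g1\<in>carrier G. \<forall>g2\<in>carrier G. \<forall>h\<in>carrier H.
        \<alpha> g1 (\<alpha> g2 h) = f g1 g2 \<otimes>\<^bsub>H\<^esub> \<alpha> (g1 \<otimes>\<^bsub>G\<^esub> g2) h \<otimes>\<^bsub>H\<^esub> inv\<^bsub>H\<^esub> (f g1 g2)) \<and>
     (\<forall>g1\<in>carrier G. \<forall>g2\<in>carrier G. \<forall>g3\<in>carrier G.
        f g1 g2 \<otimes>\<^bsub>H\<^esub> f (g1 \<otimes>\<^bsub>G\<^esub> g2) g3 = \<alpha> g1 (f g2 g3) \<otimes>\<^bsub>H\<^esub> f g1 (g2 \<otimes>\<^bsub>G\<^esub> g3))"

definition crossed_product ::
  "'h monoid \<Rightarrow> 'g monoid \<Rightarrow> ('g \<Rightarrow> 'h \<Rightarrow> 'h) \<Rightarrow> ('g \<Rightarrow> 'g \<Rightarrow> 'h) \<Rightarrow> ('h \<times> 'g) monoid" where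
  "crossed_product H G \<alpha> f =
     \<lparr>carrier = carrier H \<times> carrier G,
      mult = (\<lambda>(h1, g1) (h2, g2). (h1 \<otimes>\<^bsub>H\<^esub> \<alpha> g1 h2 \<otimes>\<^bsub>H\<^esub> f g1 g2, g1 \<otimes>\<^bsub>G\<^esub> g2)),
      one = (\<one>\<^bsub>H\<^esub>, \<one>\<^bsub>G\<^esub>)\<rparr>"

definition crossed_quadruples ::
  "'h monoid \<Rightarrow> 'g monoid \<Rightarrow> ('g \<Rightarrow> 'h \<Rightarrow> 'h) \<Rightarrow> ('g \<Rightarrow> 'g \<Rightarrow> 'h)
   \<Rightarrow> (('h \<Rightarrow> 'g) \<times> ('h \<Rightarrow> 'h) \<times> ('g \<Rightarrow> 'h) \<times> ('g \<Rightarrow> 'g)) set" where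
  "crossed_quadruples H G \<alpha> f =
     {(s, u, r, v).
        s \<in> hom H G \<inter> extensional (carrier H) \<and>
        u \<in> hom H H \<inter> extensional (carrier H) \<and>
        r \<in> carrier G \<rightarrow>\<^sub>E carrier H \<and>
        v \<in> carrier G \<rightarrow>\<^sub>E carrier G \<and>
        (\<forall>g1\<in>carrier G. \<forall>g2\<in>carrier G.
           v g1 \<otimes>\<^bsub>G\<^esub> v g2 = s (f g1 g2) \<otimes>\<^bsub>G\<^esub> v (g1 \<otimes>\<^bsub>G\<^esub> g2)) \<and>
        (\<forall>g\<in>carrier G. \<forall>h\<in>carrier H.
           r g \<otimes>\<^bsub>H\<^esub> u h = u (\<alpha> g h) \<otimes>\<^bsub>H\<^esub> r g) \<and>
        (\<forall>g1\<in>carrier G. \<forall>g2\<in>carrier G.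
           r g1 \<otimes>\<^bsub>H\<^esub> r g2 = u (f g1 g2) \<otimes>\<^bsub>H\<^esub> r (g1 \<otimes>\<^bsub>G\<^esub> g2)) \<and>
        (\<forall>g\<in>carrier G. \<forall>h\<in>carrier H.
           v g \<otimes>\<^bsub>G\<^esub> s h = s (\<alpha> g h) \<otimes>\<^bsub>G\<^esub> v g)}"

end

theory Submission
  imports Defs
begin

(* In H # G every element factors as (h, g) = (h, 1)(1, g), and the products of
   such generators are governed by three relations:
     (h,1)(h',1) = (hh',1),   (1,g)(h,1) = (g.h,1)(1,g),   (1,g1)(1,g2) = (f(g1,g2),1)(1,g1g2).
   Hence for ANY group K, a homomorphism phi : H # G -> K is the same thing as a
   "crossed pair" (u, r) with u : H -> K a homomorphism and r : G -> K a map satisfying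
   the images of the last two relations; phi corresponds to (h,g) |-> u(h) r(g), and
   conversely u(h) = phi(h,1), r(g) = phi(1,g).  Since a homomorphism into H x G is a pair of homomorphisms
   into H and into G, and a quadruple (s,u,r,v) of the corollary is exactly a crossed pair
   (u,r) into H together with a crossed pair (s,v) into G, the corollary follows. *)

definition crossed_pairs ::
  "'h monoid \<Rightarrow> 'g monoid \<Rightarrow> ('g \<Rightarrow> 'h \<Rightarrow> 'h) \<Rightarrow> ('g \<Rightarrow> 'g \<Rightarrow> 'h) \<Rightarrow> 'k monoid
   \<Rightarrow> (('h \<Rightarrow> 'k) \<times> ('g \<Rightarrow> 'k)) set" where
  "crossed_pairs H G \<alpha> f K =
     {(u, r).
        u \<in> hom H K \<inter> extensional (carrier H) \<and>
        r \<in> carrier G \<rightarrow>\<^sub>E carrier K \<and>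
        (\<forall>g\<in>carrier G. \<forall>h\<in>carrier H. r g \<otimes>\<^bsub>K\<^esub> u h = u (\<alpha> g h) \<otimes>\<^bsub>K\<^esub> r g) \<and>
        (\<forall>g1\<in>carrier G. \<forall>g2\<in>carrier G.
           r g1 \<otimes>\<^bsub>K\<^esub> r g2 = u (f g1 g2) \<otimes>\<^bsub>K\<^esub> r (g1 \<otimes>\<^bsub>G\<^esub> g2))}"

definition crossed_map ::
  "'h monoid \<Rightarrow> 'g monoid \<Rightarrow> 'k monoid \<Rightarrow> ('h \<Rightarrow> 'k) \<times> ('g \<Rightarrow> 'k) \<Rightarrow> ('h \<times> 'g \<Rightarrow> 'k)" where
  "crossed_map H G K = (\<lambda>(u, r). \<lambda>x\<in>carrier H \<times> carrier G. u (fst x) \<otimes>\<^bsub>K\<^esub> r (snd x))"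

definition crossed_components ::
  "'h monoid \<Rightarrow> 'g monoid \<Rightarrow> ('h \<times> 'g \<Rightarrow> 'k) \<Rightarrow> ('h \<Rightarrow> 'k) \<times> ('g \<Rightarrow> 'k)" where
  "crossed_components H G \<phi> =
     ((\<lambda>h\<in>carrier H. \<phi> (h, \<one>\<^bsub>G\<^esub>)), (\<lambda>g\<in>carrier G. \<phi> (\<one>\<^bsub>H\<^esub>, g)))"

definition quadruple_hom ::
  "'h monoid \<Rightarrow> 'g monoid \<Rightarrow> ('h \<Rightarrow> 'g) \<times> ('h \<Rightarrow> 'h) \<times> ('g \<Rightarrow> 'h) \<times> ('g \<Rightarrow> 'g)
   \<Rightarrow> ('h \<times> 'g \<Rightarrow> 'h \<times> 'g)" where
  "quadruple_hom H G = (\<lambda>(s, u, r, v). \<lambda>x\<in>carrier H \<times> carrier G.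
     (crossed_map H G H (u, r) x, crossed_map H G G (s, v) x))"

definition hom_quadruple ::
  "'h monoid \<Rightarrow> 'g monoid \<Rightarrow> ('h \<times> 'g \<Rightarrow> 'h \<times> 'g)
   \<Rightarrow> ('h \<Rightarrow> 'g) \<times> ('h \<Rightarrow> 'h) \<times> ('g \<Rightarrow> 'h) \<times> ('g \<Rightarrow> 'g)" where
  "hom_quadruple H G \<psi> =
     (case (crossed_components H G (fst \<circ> \<psi>), crossed_components H G (snd \<circ> \<psi>)) of
        ((u, r), (s, v)) \<Rightarrow> (s, u, r, v))"

lemma crossed_quadruples_iff:
  "(s, u, r, v) \<in> crossed_quadruples H G \<alpha> f \<longleftrightarrow>
     (u, r) \<in> crossed_pairs H G \<alpha> f H \<and> (s, v) \<in> crossed_pairs H G \<alpha> f G"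
  unfolding crossed_quadruples_def crossed_pairs_def by auto

lemma crossed_pairsD:
  assumes "(u, r) \<in> crossed_pairs H G \<alpha> f K"
  shows "u \<in> hom H K" "u \<in> extensional (carrier H)" "r \<in> carrier G \<rightarrow>\<^sub>E carrier K"
    "\<And>g h. g \<in> carrier G \<Longrightarrow> h \<in> carrier H \<Longrightarrow> r g \<otimes>\<^bsub>K\<^esub> u h = u (\<alpha> g h) \<otimes>\<^bsub>K\<^esub> r g"
    "\<And>g1 g2. g1 \<in> carrier G \<Longrightarrow> g2 \<in> carrier G \<Longrightarrow>
       r g1 \<otimes>\<^bsub>K\<^esub> r g2 = u (f g1 g2) \<otimes>\<^bsub>K\<^esub> r (g1 \<otimes>\<^bsub>G\<^esub> g2)"
  using assms by (simp_all add: crossed_pairs_def)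

lemma hom_restrict_closed:
  assumes "h \<in> hom M N"
    and "\<And>x y. x \<in> carrier M \<Longrightarrow> y \<in> carrier M \<Longrightarrow> x \<otimes>\<^bsub>M\<^esub> y \<in> carrier M"
  shows "(\<lambda>x\<in>carrier M. h x) \<in> hom M N"
  using assms by (auto simp: hom_def)

lemma crossed_product_carrier [simp]:
  "carrier (crossed_product H G \<alpha> f) = carrier H \<times> carrier G"
  by (simp add: crossed_product_def)

lemma crossed_product_mult [simp]:
  "(h1, g1) \<otimes>\<^bsub>crossed_product H G \<alpha> f\<^esub> (h2, g2) =
     (h1 \<otimes>\<^bsub>H\<^esub> \<alpha> g1 h2 \<otimes>\<^bsub>H\<^esub> f g1 g2, g1 \<otimes>\<^bsub>G\<^esub> g2)"
  by (simp add: crossed_product_def)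

locale crossed_system =
  fixes H :: "'h monoid" and G :: "'g monoid"
    and \<alpha> :: "'g \<Rightarrow> 'h \<Rightarrow> 'h" and f :: "'g \<Rightarrow> 'g \<Rightarrow> 'h"
  assumes crossed: "normalized_crossed_system H G \<alpha> f"
begin

sublocale H: group H
  using crossed by (simp add: normalized_crossed_system_def)

sublocale G: group G
  using crossed by (simp add: normalized_crossed_system_def)

abbreviation (input) C :: "('h \<times> 'g) monoid" where "C \<equiv> crossed_product H G \<alpha> f"

lemma action_hom: "g \<in> carrier G \<Longrightarrow> \<alpha> g \<in> hom H H"
  using crossed by (simp add: normalized_crossed_system_def iso_def)

lemma action_inj: "g \<in> carrier G \<Longrightarrow> inj_on (\<alpha> g) (carrier H)"
  using crossed by (simp add: normalized_crossed_system_def iso_def bij_betw_def)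

lemma action_closed [simp]: "g \<in> carrier G \<Longrightarrow> h \<in> carrier H \<Longrightarrow> \<alpha> g h \<in> carrier H"
  by (rule hom_in_carrier[OF action_hom])

lemma action_one [simp]: "g \<in> carrier G \<Longrightarrow> \<alpha> g \<one>\<^bsub>H\<^esub> = \<one>\<^bsub>H\<^esub>"
  using action_hom H.group_axioms by (simp add: hom_one)

lemma cocycle_closed [simp]:
  "g1 \<in> carrier G \<Longrightarrow> g2 \<in> carrier G \<Longrightarrow> f g1 g2 \<in> carrier H"
  using crossed by (simp add: normalized_crossed_system_def)

lemma cocycle_one_one [simp]: "f \<one>\<^bsub>G\<^esub> \<one>\<^bsub>G\<^esub> = \<one>\<^bsub>H\<^esub>"
  using crossed by (simp add: normalized_crossed_system_def)

lemma twisted_action: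
  "\<lbrakk>g1 \<in> carrier G; g2 \<in> carrier G; h \<in> carrier H\<rbrakk> \<Longrightarrow>
     \<alpha> g1 (\<alpha> g2 h) = f g1 g2 \<otimes>\<^bsub>H\<^esub> \<alpha> (g1 \<otimes>\<^bsub>G\<^esub> g2) h \<otimes>\<^bsub>H\<^esub> inv\<^bsub>H\<^esub> (f g1 g2)"
  using crossed by (simp add: normalized_crossed_system_def)

lemma cocycle:
  "\<lbrakk>g1 \<in> carrier G; g2 \<in> carrier G; g3 \<in> carrier G\<rbrakk> \<Longrightarrow>
     f g1 g2 \<otimes>\<^bsub>H\<^esub> f (g1 \<otimes>\<^bsub>G\<^esub> g2) g3 = \<alpha> g1 (f g2 g3) \<otimes>\<^bsub>H\<^esub> f g1 (g2 \<otimes>\<^bsub>G\<^esub> g3)"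
  using crossed by (simp add: normalized_crossed_system_def)

(* Normalization forces the unit of G to act trivially: apply (WA) at (1, 1) and
   cancel the injective map alpha 1. *)
lemma action_unit [simp]:
  assumes h: "h \<in> carrier H" shows "\<alpha> \<one>\<^bsub>G\<^esub> h = h"
proof -
  have "\<alpha> \<one>\<^bsub>G\<^esub> (\<alpha> \<one>\<^bsub>G\<^esub> h) = \<alpha> \<one>\<^bsub>G\<^esub> h"
    using twisted_action[of "\<one>\<^bsub>G\<^esub>" "\<one>\<^bsub>G\<^esub>" h] h by simp
  then show ?thesis
    using action_inj[of "\<one>\<^bsub>G\<^esub>"] h by (simp add: inj_on_eq_iff)
qed

lemma cocycle_one_left [simp]:
  assumes g: "g \<in> carrier G" shows "f \<one>\<^bsub>G\<^esub> g = \<one>\<^bsub>H\<^esub>"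
proof -
  have "f \<one>\<^bsub>G\<^esub> g = f \<one>\<^bsub>G\<^esub> g \<otimes>\<^bsub>H\<^esub> f \<one>\<^bsub>G\<^esub> g"
    using cocycle[of "\<one>\<^bsub>G\<^esub>" "\<one>\<^bsub>G\<^esub>" g] g by simp
  then show ?thesis using g by simp
qed

lemma cocycle_one_right [simp]:
  assumes g: "g \<in> carrier G" shows "f g \<one>\<^bsub>G\<^esub> = \<one>\<^bsub>H\<^esub>"
proof -
  have "f g \<one>\<^bsub>G\<^esub> \<otimes>\<^bsub>H\<^esub> f g \<one>\<^bsub>G\<^esub> = f g \<one>\<^bsub>G\<^esub>"
    using cocycle[of g "\<one>\<^bsub>G\<^esub>" "\<one>\<^bsub>G\<^esub>"] g by simp
  then show ?thesis using g by simp
qed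

lemma split_element:
  "h \<in> carrier H \<Longrightarrow> g \<in> carrier G \<Longrightarrow> (h, \<one>\<^bsub>G\<^esub>) \<otimes>\<^bsub>C\<^esub> (\<one>\<^bsub>H\<^esub>, g) = (h, g)"
  by simp

lemma mult_H_H:
  "h \<in> carrier H \<Longrightarrow> h' \<in> carrier H \<Longrightarrow>
     (h, \<one>\<^bsub>G\<^esub>) \<otimes>\<^bsub>C\<^esub> (h', \<one>\<^bsub>G\<^esub>) = (h \<otimes>\<^bsub>H\<^esub> h', \<one>\<^bsub>G\<^esub>)"
  by simp

lemma mult_G_H:
  "g \<in> carrier G \<Longrightarrow> h \<in> carrier H \<Longrightarrow>
     (\<one>\<^bsub>H\<^esub>, g) \<otimes>\<^bsub>C\<^esub> (h, \<one>\<^bsub>G\<^esub>) = (\<alpha> g h, \<one>\<^bsub>G\<^esub>) \<otimes>\<^bsub>C\<^esub> (\<one>\<^bsub>H\<^esub>, g)"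
  by simp

lemma mult_G_G:
  "g1 \<in> carrier G \<Longrightarrow> g2 \<in> carrier G \<Longrightarrow>
     (\<one>\<^bsub>H\<^esub>, g1) \<otimes>\<^bsub>C\<^esub> (\<one>\<^bsub>H\<^esub>, g2) = (f g1 g2, \<one>\<^bsub>G\<^esub>) \<otimes>\<^bsub>C\<^esub> (\<one>\<^bsub>H\<^esub>, g1 \<otimes>\<^bsub>G\<^esub> g2)"
  by simp

lemma crossed_product_closed:
  "x \<in> carrier C \<Longrightarrow> y \<in> carrier C \<Longrightarrow> x \<otimes>\<^bsub>C\<^esub> y \<in> carrier C"
  by (cases x, cases y) auto

(* A crossed pair (u, r) defines a homomorphism: the relation for r g * u h moves
   u past r, and the relation for r g1 * r g2 absorbs the cocycle factor. *)
lemma crossed_map_hom: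
  assumes K: "group K" and ur: "(u, r) \<in> crossed_pairs H G \<alpha> f K"
  shows "crossed_map H G K (u, r) \<in> hom C K"
proof -
  interpret K: group K by (rule K)
  note pair = crossed_pairsD[OF ur]
  have uC: "u h \<in> carrier K" if "h \<in> carrier H" for h using pair(1) that by (rule hom_in_carrier)
  have rC: "r g \<in> carrier K" if "g \<in> carrier G" for g using pair(3) that by (rule PiE_mem)
  have u_mult: "u (h \<otimes>\<^bsub>H\<^esub> h') = u h \<otimes>\<^bsub>K\<^esub> u h'" if "h \<in> carrier H" "h' \<in> carrier H" for h h'
    using pair(1) that by (rule hom_mult)
  show ?thesis
  proof (rule homI)
    fix x assume "x \<in> carrier C"
    then show "crossed_map H G K (u, r) x \<in> carrier K"
      by (auto simp: crossed_map_def uC rC)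
  next
    fix x y assume "x \<in> carrier C" "y \<in> carrier C"
    then obtain h1 g1 h2 g2 where x: "x = (h1, g1)" and y: "y = (h2, g2)"
      and in_carrier: "h1 \<in> carrier H" "g1 \<in> carrier G" "h2 \<in> carrier H" "g2 \<in> carrier G"
      by auto
    have "u (h1 \<otimes>\<^bsub>H\<^esub> \<alpha> g1 h2 \<otimes>\<^bsub>H\<^esub> f g1 g2) \<otimes>\<^bsub>K\<^esub> r (g1 \<otimes>\<^bsub>G\<^esub> g2)
        = u h1 \<otimes>\<^bsub>K\<^esub> u (\<alpha> g1 h2) \<otimes>\<^bsub>K\<^esub> (u (f g1 g2) \<otimes>\<^bsub>K\<^esub> r (g1 \<otimes>\<^bsub>G\<^esub> g2))"
      using in_carrier by (simp add: u_mult uC rC K.m_assoc)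
    also have "\<dots> = u h1 \<otimes>\<^bsub>K\<^esub> (u (\<alpha> g1 h2) \<otimes>\<^bsub>K\<^esub> r g1) \<otimes>\<^bsub>K\<^esub> r g2"
      using in_carrier pair(5) by (simp add: uC rC K.m_assoc)
    also have "\<dots> = u h1 \<otimes>\<^bsub>K\<^esub> (r g1 \<otimes>\<^bsub>K\<^esub> u h2) \<otimes>\<^bsub>K\<^esub> r g2"
      using in_carrier pair(4) by simp
    also have "\<dots> = (u h1 \<otimes>\<^bsub>K\<^esub> r g1) \<otimes>\<^bsub>K\<^esub> (u h2 \<otimes>\<^bsub>K\<^esub> r g2)"
      using in_carrier by (simp add: uC rC K.m_assoc)
    finally show "crossed_map H G K (u, r) (x \<otimes>\<^bsub>C\<^esub> y) =
        crossed_map H G K (u, r) x \<otimes>\<^bsub>K\<^esub> crossed_map H G K (u, r) y"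
      using in_carrier by (simp add: x y crossed_map_def)
  qed
qed

(* Conversely, the components of a homomorphism form a crossed pair: apply phi to
   the three relations between generators. *)
lemma crossed_components_pairs:
  assumes phi: "\<phi> \<in> hom C K"
  shows "crossed_components H G \<phi> \<in> crossed_pairs H G \<alpha> f K"
proof -
  have closed: "\<phi> (h, g) \<in> carrier K" if "h \<in> carrier H" "g \<in> carrier G" for h g
    using hom_in_carrier[OF phi] that by simp
  have mult: "\<phi> (x \<otimes>\<^bsub>C\<^esub> y) = \<phi> x \<otimes>\<^bsub>K\<^esub> \<phi> y" if "x \<in> carrier C" "y \<in> carrier C" for x y
    using phi that by (rule hom_mult)
  have "(\<lambda>h\<in>carrier H. \<phi> (h, \<one>\<^bsub>G\<^esub>)) \<in> hom H K"
    by (rule homI) (simp_all add: closed mult_H_H mult[symmetric] del: crossed_product_mult)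
  moreover have "\<phi> (\<one>\<^bsub>H\<^esub>, g) \<otimes>\<^bsub>K\<^esub> \<phi> (h, \<one>\<^bsub>G\<^esub>) = \<phi> (\<alpha> g h, \<one>\<^bsub>G\<^esub>) \<otimes>\<^bsub>K\<^esub> \<phi> (\<one>\<^bsub>H\<^esub>, g)"
    if "g \<in> carrier G" "h \<in> carrier H" for g h
    using mult_G_H[OF that] that by (simp add: mult[symmetric] del: crossed_product_mult)
  moreover have "\<phi> (\<one>\<^bsub>H\<^esub>, g1) \<otimes>\<^bsub>K\<^esub> \<phi> (\<one>\<^bsub>H\<^esub>, g2) =
      \<phi> (f g1 g2, \<one>\<^bsub>G\<^esub>) \<otimes>\<^bsub>K\<^esub> \<phi> (\<one>\<^bsub>H\<^esub>, g1 \<otimes>\<^bsub>G\<^esub> g2)"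
    if "g1 \<in> carrier G" "g2 \<in> carrier G" for g1 g2
    using mult_G_G[OF that] that by (simp add: mult[symmetric] del: crossed_product_mult)
  ultimately show ?thesis
    by (simp add: crossed_components_def crossed_pairs_def closed)
qed

(* A homomorphism is recovered from its components, by the factorization
   (h, g) = (h, 1)(1, g). *)
lemma crossed_map_components:
  assumes phi: "\<phi> \<in> hom C K" and x: "x \<in> carrier C"
  shows "crossed_map H G K (crossed_components H G \<phi>) x = \<phi> x"
proof -
  obtain h g where hg: "x = (h, g)" "h \<in> carrier H" "g \<in> carrier G"
    using x by auto
  have "\<phi> (h, \<one>\<^bsub>G\<^esub>) \<otimes>\<^bsub>K\<^esub> \<phi> (\<one>\<^bsub>H\<^esub>, g) = \<phi> ((h, \<one>\<^bsub>G\<^esub>) \<otimes>\<^bsub>C\<^esub> (\<one>\<^bsub>H\<^esub>, g))"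
    using hg by (simp add: hom_mult[OF phi] del: crossed_product_mult)
  also have "\<dots> = \<phi> x"
    using hg split_element by simp
  finally show ?thesis
    using hg by (simp add: crossed_map_def crossed_components_def)
qed

lemma crossed_components_cong:
  assumes "\<And>h g. h \<in> carrier H \<Longrightarrow> g \<in> carrier G \<Longrightarrow> \<phi> (h, g) = \<phi>' (h, g)"
  shows "crossed_components H G \<phi> = crossed_components H G \<phi>'"
  unfolding crossed_components_def using assms by (auto intro!: restrict_ext)

(* A crossed pair is recovered from the homomorphism it defines; this uses
   u 1 = 1 and r 1 = 1, the latter from the relation for r 1 * r 1. *)
lemma crossed_components_map:
  assumes K: "group K" and ur: "(u, r) \<in> crossed_pairs H G \<alpha> f K"
  shows "crossed_components H G (crossed_map H G K (u, r)) = (u, r)"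
proof -
  interpret K: group K by (rule K)
  note pair = crossed_pairsD[OF ur]
  have rC: "r g \<in> carrier K" if "g \<in> carrier G" for g using pair(3) that by (rule PiE_mem)
  have u_one: "u \<one>\<^bsub>H\<^esub> = \<one>\<^bsub>K\<^esub>"
    using pair(1) H.group_axioms K.group_axioms by (rule hom_one)
  have "r \<one>\<^bsub>G\<^esub> \<otimes>\<^bsub>K\<^esub> r \<one>\<^bsub>G\<^esub> = r \<one>\<^bsub>G\<^esub>"
    using pair(5)[of "\<one>\<^bsub>G\<^esub>" "\<one>\<^bsub>G\<^esub>"] u_one rC by simp
  then have r_one: "r \<one>\<^bsub>G\<^esub> = \<one>\<^bsub>K\<^esub>"
    using rC by simp
  have "(\<lambda>h\<in>carrier H. u h \<otimes>\<^bsub>K\<^esub> r \<one>\<^bsub>G\<^esub>) = u"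
    by (rule extensionalityI[OF restrict_extensional pair(2)])
      (simp add: r_one hom_in_carrier[OF pair(1)])
  moreover have "(\<lambda>g\<in>carrier G. u \<one>\<^bsub>H\<^esub> \<otimes>\<^bsub>K\<^esub> r g) = r"
    by (rule extensionalityI[OF restrict_extensional pair(3)[unfolded PiE_iff, THEN conjunct2]])
      (simp_all add: u_one rC)
  ultimately show ?thesis
    by (simp add: crossed_components_def crossed_map_def cong: restrict_cong)
qed

abbreviation (input) Q :: "(('h \<Rightarrow> 'g) \<times> ('h \<Rightarrow> 'h) \<times> ('g \<Rightarrow> 'h) \<times> ('g \<Rightarrow> 'g)) set" where "Q \<equiv> crossed_quadruples H G \<alpha> f"

lemma quadruple_hom_hom:
  assumes q: "q \<in> Q"
  shows "quadruple_hom H G q \<in> hom C (H \<times>\<times> G)"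
proof -
  obtain s u r v where q_def: "q = (s, u, r, v)" by (cases q) auto
  have "crossed_map H G H (u, r) \<in> hom C H" "crossed_map H G G (s, v) \<in> hom C G"
    using q crossed_map_hom[OF H.group_axioms] crossed_map_hom[OF G.group_axioms]
    by (simp_all add: q_def crossed_quadruples_iff)
  then have "(\<lambda>x. (crossed_map H G H (u, r) x, crossed_map H G G (s, v) x)) \<in> hom C (H \<times>\<times> G)"
    by (simp add: hom_paired)
  from hom_restrict_closed[OF this crossed_product_closed] show ?thesis
    by (simp add: q_def quadruple_hom_def)
qed

lemma hom_quadruple_quadruples:
  assumes psi: "\<psi> \<in> hom C (H \<times>\<times> G)"
  shows "hom_quadruple H G \<psi> \<in> Q"
proof -
  obtain u r s v where ur: "crossed_components H G (fst \<circ> \<psi>) = (u, r)"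
    and sv: "crossed_components H G (snd \<circ> \<psi>) = (s, v)"
    by (meson prod.exhaust)
  have "(u, r) \<in> crossed_pairs H G \<alpha> f H" "(s, v) \<in> crossed_pairs H G \<alpha> f G"
    using crossed_components_pairs psi ur sv by (metis hom_pairwise)+
  then show ?thesis
    by (simp add: hom_quadruple_def ur sv crossed_quadruples_iff)
qed

lemma hom_quadruple_inverse:
  assumes q: "q \<in> Q"
  shows "hom_quadruple H G (quadruple_hom H G q) = q"
proof -
  obtain s u r v where q_def: "q = (s, u, r, v)" by (cases q) auto
  have pairs: "(u, r) \<in> crossed_pairs H G \<alpha> f H" "(s, v) \<in> crossed_pairs H G \<alpha> f G"
    using q by (simp_all add: q_def crossed_quadruples_iff)
  have "crossed_components H G (fst \<circ> quadruple_hom H G q) =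
      crossed_components H G (crossed_map H G H (u, r))"
    by (rule crossed_components_cong) (simp add: q_def quadruple_hom_def)
  also have "\<dots> = (u, r)"
    by (rule crossed_components_map[OF H.group_axioms pairs(1)])
  moreover have "crossed_components H G (snd \<circ> quadruple_hom H G q) =
      crossed_components H G (crossed_map H G G (s, v))"
    by (rule crossed_components_cong) (simp add: q_def quadruple_hom_def)
  moreover have "\<dots> = (s, v)"
    by (rule crossed_components_map[OF G.group_axioms pairs(2)])
  ultimately show ?thesis
    by (simp add: hom_quadruple_def q_def)
qed

lemma quadruple_hom_inverse:
  assumes psi: "\<psi> \<in> hom C (H \<times>\<times> G)" and ext: "\<psi> \<in> extensional (carrier C)"
  shows "quadruple_hom H G (hom_quadruple H G \<psi>) = \<psi>"
proof (rule extensionalityI[OF _ ext])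
  show "quadruple_hom H G (hom_quadruple H G \<psi>) \<in> extensional (carrier C)"
    by (simp add: quadruple_hom_def hom_quadruple_def split: prod.split)
next
  fix x assume x: "x \<in> carrier C"
  obtain u r s v where ur: "crossed_components H G (fst \<circ> \<psi>) = (u, r)"
    and sv: "crossed_components H G (snd \<circ> \<psi>) = (s, v)"
    by (meson prod.exhaust)
  have "fst \<circ> \<psi> \<in> hom C H" "snd \<circ> \<psi> \<in> hom C G"
    using psi by (simp_all add: hom_pairwise)
  from crossed_map_components[OF this(1) x] crossed_map_components[OF this(2) x]
  have "crossed_map H G H (u, r) x = fst (\<psi> x)" "crossed_map H G G (s, v) x = snd (\<psi> x)"
    by (simp_all add: ur sv)
  then show "quadruple_hom H G (hom_quadruple H G \<psi>) x = \<psi> x"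
    using x by (simp add: quadruple_hom_def hom_quadruple_def ur sv)
qed

theorem quadruple_hom_bij:
  "bij_betw (quadruple_hom H G) Q (hom C (H \<times>\<times> G) \<inter> extensional (carrier C))"
proof (rule bij_betwI[where g = "hom_quadruple H G"])
  show "quadruple_hom H G \<in> Q \<rightarrow> hom C (H \<times>\<times> G) \<inter> extensional (carrier C)"
    by (intro funcsetI IntI quadruple_hom_hom) (auto simp: quadruple_hom_def split: prod.splits)
  show "hom_quadruple H G \<in> hom C (H \<times>\<times> G) \<inter> extensional (carrier C) \<rightarrow> Q"
    by (auto simp: hom_quadruple_quadruples)
qed (simp_all add: hom_quadruple_inverse quadruple_hom_inverse)

end


theorem corollary2p6:
  fixes H :: "'h monoid" and G :: "'g monoid"
    and \<alpha> :: "'g \<Rightarrow> 'h \<Rightarrow> 'h" and f :: "'g \<Rightarrow> 'g \<Rightarrow> 'h"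
  assumes "normalized_crossed_system H G \<alpha> f"
  shows "bij_betw
           (\<lambda>(s, u, r, v). (\<lambda>x\<in>carrier H \<times> carrier G.
               (u (fst x) \<otimes>\<^bsub>H\<^esub> r (snd x), s (fst x) \<otimes>\<^bsub>G\<^esub> v (snd x))))
           (crossed_quadruples H G \<alpha> f)
           (hom (crossed_product H G \<alpha> f) (H \<times>\<times> G) \<inter> extensional (carrier H \<times> carrier G))"
proof -
  interpret crossed_system H G \<alpha> f by (rule crossed_system.intro[OF assms])
  have "(\<lambda>(s, u, r, v). (\<lambda>x\<in>carrier H \<times> carrier G.
            (u (fst x) \<otimes>\<^bsub>H\<^esub> r (snd x), s (fst x) \<otimes>\<^bsub>G\<^esub> v (snd x)))) = quadruple_hom H G"
    by (auto simp: quadruple_hom_def crossed_map_def fun_eq_iff cong: restrict_cong)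
  then show ?thesis
    using quadruple_hom_bij by simp
qed

end
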